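(* Let $\sigma\subseteq N_\mathbb{Q}$ be a strongly convex rational polyhedral cone, $\tau$ a $k$-dimensional regular face with primitive ray generators $p_1,\ldots,p_k$, $\{e_1^{(r)},e_2^{(r)}\}_{r=1}^k$ a set of Demazure roots of $\sigma$ compatible with $\tau$, and $\gamma$ a face of $\sigma$. Suppose that for each $r$ with $p_r\notin\gamma$ at least one of $e_1^{(r)},e_2^{(r)}$ lies in $\gamma^\perp$. Then for every $r$ with $p_r\notin\gamma$ there exists $u\in\gamma^\perp\cap\sigma^\vee$ such that $\langle p_r,u\rangle=1$ and $\langle p_j,u\rangle=0$ for all $j\ne r$, $1\le j\le k$.
   Context: $N$ lattice, $M$ dual, $\langle\cdot,\cdot\rangle$ pairing, $\sigma^\vee$ the dual cone. Regular face: primitive ray generators extend to a basis of $N$. Demazure root for a ray generator $p_i$ of $\sigma$: $e\in M$ with $\langle p_i,e\rangle=-1$ and $\langle p_j,e\rangle\ge0$ for all other ray generators of $\sigma$. Compatibility with $\tau$: $\langle p_s,e_1^{(r)}\rangle=\langle p_s,e_2^{(r)}\rangle=-\delta_{rs}$ for $r,s=1,\ldots,k$. *)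

theory Defs
  imports "HOL-Analysis.Analysis"
begin

text \<open>Conventions: N = Z^n and M = Z^n sit inside N_Q = M_Q = rat^'n
  (the dimension n is the cardinality of the finite index type 'n).
  The pairing is the standard one.\<close>

definition pair :: "rat ^ 'n \<Rightarrow> rat ^ 'n \<Rightarrow> rat" where
  "pair v u = (\<Sum>i\<in>UNIV. v $ i * u $ i)"

definition lattice_pt :: "rat ^ 'n \<Rightarrow> bool" where
  "lattice_pt v \<longleftrightarrow> (\<forall>i. v $ i \<in> \<int>)"

definition primitive :: "rat ^ 'n \<Rightarrow> bool" where
  "primitive v \<longleftrightarrow> lattice_pt v \<and> v \<noteq> 0 \<and>
     (\<forall>(m::int) w. lattice_pt w \<and> v = of_int m *s w \<longrightarrow> \<bar>m\<bar> = 1)"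

definition cone_gen :: "(rat ^ 'n) set \<Rightarrow> (rat ^ 'n) set" where
  "cone_gen S = {\<Sum>v\<in>S. a v *s v | a. \<forall>v\<in>S. a v \<ge> 0}"

definition rat_poly_cone :: "(rat ^ 'n) set \<Rightarrow> bool" where
  "rat_poly_cone \<sigma> \<longleftrightarrow> (\<exists>S. finite S \<and> (\<forall>v\<in>S. lattice_pt v) \<and> \<sigma> = cone_gen S)"

definition strongly_convex :: "(rat ^ 'n) set \<Rightarrow> bool" where
  "strongly_convex \<sigma> \<longleftrightarrow> (\<forall>x. x \<in> \<sigma> \<and> - x \<in> \<sigma> \<longrightarrow> x = 0)"

definition dual_cone :: "(rat ^ 'n) set \<Rightarrow> (rat ^ 'n) set" where
  "dual_cone \<sigma> = {u. \<forall>v\<in>\<sigma>. pair v u \<ge> 0}"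

definition perp :: "(rat ^ 'n) set \<Rightarrow> (rat ^ 'n) set" where
  "perp \<gamma> = {u. \<forall>v\<in>\<gamma>. pair v u = 0}"

definition is_face :: "(rat ^ 'n) set \<Rightarrow> (rat ^ 'n) set \<Rightarrow> bool" where
  "is_face \<gamma> \<sigma> \<longleftrightarrow> (\<exists>u\<in>dual_cone \<sigma>. \<gamma> = \<sigma> \<inter> {v. pair v u = 0})"

definition ray_gens :: "(rat ^ 'n) set \<Rightarrow> (rat ^ 'n) set" where
  "ray_gens \<sigma> = {p. primitive p \<and> is_face (cone_gen {p}) \<sigma>}"

definition extends_to_lattice_basis :: "(rat ^ 'n) set \<Rightarrow> bool" where
  "extends_to_lattice_basis P \<longleftrightarrow> (\<exists>B. finite B \<and> P \<subseteq> B \<and> (\<forall>b\<in>B. lattice_pt b) \<and>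
     (\<forall>c. (\<Sum>b\<in>B. c b *s b) = 0 \<longrightarrow> (\<forall>b\<in>B. c b = 0)) \<and>
     (\<forall>x. lattice_pt x \<longrightarrow> (\<exists>c. (\<forall>b\<in>B. c b \<in> \<int>) \<and> x = (\<Sum>b\<in>B. c b *s b))))"

definition regular_face :: "(rat ^ 'n) set \<Rightarrow> (rat ^ 'n) set \<Rightarrow> bool" where
  "regular_face \<tau> \<sigma> \<longleftrightarrow> is_face \<tau> \<sigma> \<and> extends_to_lattice_basis (ray_gens \<tau>)"

definition demazure_root :: "(rat ^ 'n) set \<Rightarrow> rat ^ 'n \<Rightarrow> rat ^ 'n \<Rightarrow> bool" where
  "demazure_root \<sigma> p e \<longleftrightarrow> p \<in> ray_gens \<sigma> \<and> lattice_pt e \<and> pair p e = -1 \<and>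
     (\<forall>q\<in>ray_gens \<sigma>. q \<noteq> p \<longrightarrow> pair q e \<ge> 0)"

end

theory Submission
  imports Defs
begin

(* Let w \<in> \<sigma>\<^sup>\<or> cut out the face \<gamma>, normalised so that <p_r, w> = 1. For every j \<noteq> r with
   p_j \<notin> \<gamma> pick the root e_j among e_1^(j), e_2^(j) that lies in \<gamma>\<^sup>\<bottom>, and put
   u = w + \<Sum>_j <p_j, w> e_j. Compatibility makes <p_j, u> = 0 for these j, while <p_j, w> = 0
   already holds for p_j \<in> \<gamma>. Nonnegativity of u on \<sigma> only has to be checked on the ray
   generators, where it follows from the defining inequalities of Demazure roots. That the ray
   generators span \<sigma> as a cone rests on Farkas' lemma over \<rat>. *)

lemma pair_add_left: "pair (v + w) u = pair v u + pair w u"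
  by (simp add: pair_def distrib_right sum.distrib)

lemma pair_add_right: "pair u (v + w) = pair u v + pair u w"
  by (simp add: pair_def distrib_left sum.distrib)

lemma pair_diff_left: "pair (v - w) u = pair v u - pair w u"
  by (simp add: pair_def left_diff_distrib sum_subtractf)

lemma pair_diff_right: "pair u (v - w) = pair u v - pair u w"
  by (simp add: pair_def right_diff_distrib sum_subtractf)

lemma pair_neg_left: "pair (- v) u = - pair v u"
  by (simp add: pair_def sum_negf)

lemma pair_neg_right: "pair u (- v) = - pair u v"
  by (simp add: pair_def sum_negf)

lemma pair_scale_left: "pair (c *s v) u = c * pair v u"
  by (simp add: pair_def sum_distrib_left mult.assoc)

lemma pair_scale_right: "pair u (c *s v) = c * pair u v"
  by (simp add: pair_def sum_distrib_left mult.left_commute)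

lemma pair_zero_left: "pair 0 u = 0"
  by (simp add: pair_def)

lemma pair_zero_right: "pair u 0 = 0"
  by (simp add: pair_def)

lemma pair_sum_left: "pair (\<Sum>i\<in>I. f i) u = (\<Sum>i\<in>I. pair (f i) u)"
  by (induction I rule: infinite_finite_induct) (auto simp: pair_zero_left pair_add_left)

lemma pair_sum_right: "pair u (\<Sum>i\<in>I. f i) = (\<Sum>i\<in>I. pair u (f i))"
  by (induction I rule: infinite_finite_induct) (auto simp: pair_zero_right pair_add_right)

lemmas pair_simps = pair_add_left pair_add_right pair_diff_left pair_diff_right
  pair_neg_left pair_neg_right pair_scale_left pair_scale_right pair_zero_left pair_zero_right
  pair_sum_left pair_sum_right

lemma pair_commute: "pair v u = pair u v"
  by (simp add: pair_def mult.commute)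

lemma pair_self_pos:
  assumes "v \<noteq> 0"
  shows "0 < pair v v"
proof -
  from assms obtain i where "v $ i \<noteq> 0"
    by (auto simp: vec_eq_iff)
  then have "0 < v $ i * v $ i"
    by (auto simp: zero_less_mult_iff linorder_neq_iff)
  also have "\<dots> \<le> pair v v"
    unfolding pair_def by (rule member_le_sum) auto
  finally show ?thesis .
qed

definition fam_cone :: "('i \<Rightarrow> rat ^ 'n) \<Rightarrow> 'i set \<Rightarrow> (rat ^ 'n) set" where
  "fam_cone g I = {\<Sum>i\<in>I. a i *s g i | a. \<forall>i\<in>I. 0 \<le> a i}"

lemma cone_gen_eq_fam_cone: "cone_gen S = fam_cone (\<lambda>v. v) S"
  by (simp add: cone_gen_def fam_cone_def)

lemma fam_cone_insert:
  assumes "finite I" "i0 \<notin> I"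
  shows "fam_cone g (insert i0 I) = {y + c *s g i0 | y c. y \<in> fam_cone g I \<and> 0 \<le> c}"
proof (intro set_eqI iffI)
  fix v
  assume "v \<in> fam_cone g (insert i0 I)"
  then obtain a where a: "v = (\<Sum>i\<in>insert i0 I. a i *s g i)" "\<forall>i\<in>insert i0 I. 0 \<le> a i"
    by (auto simp: fam_cone_def)
  then have "v = (\<Sum>i\<in>I. a i *s g i) + a i0 *s g i0"
    using assms by (simp add: add.commute)
  with a(2) show "v \<in> {y + c *s g i0 | y c. y \<in> fam_cone g I \<and> 0 \<le> c}"
    unfolding fam_cone_def by blast
next
  fix v
  assume "v \<in> {y + c *s g i0 | y c. y \<in> fam_cone g I \<and> 0 \<le> c}"
  then obtain a c where v: "v = (\<Sum>i\<in>I. a i *s g i) + c *s g i0" "\<forall>i\<in>I. 0 \<le> a i" "0 \<le> c"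
    by (auto simp: fam_cone_def)
  have "(\<Sum>i\<in>I. (a(i0 := c)) i *s g i) = (\<Sum>i\<in>I. a i *s g i)"
    using assms(2) by (intro sum.cong) auto
  then have "v = (\<Sum>i\<in>insert i0 I. (a(i0 := c)) i *s g i)"
    using assms v(1) by (simp add: add.commute)
  with v(2,3) show "v \<in> fam_cone g (insert i0 I)"
    unfolding fam_cone_def by (auto intro!: exI[of _ "a(i0 := c)"])
qed

lemma pair_fam_cone_nonneg:
  assumes "v \<in> fam_cone g I" "\<forall>i\<in>I. 0 \<le> pair (g i) u"
  shows "0 \<le> pair v u"
  using assms by (auto simp: fam_cone_def pair_simps intro!: sum_nonneg)

(* The inductive step of Farkas' lemma: when the new generator g i0 violates the functional u,
   project along g i0 onto the hyperplane u\<^sup>\<bottom>. *)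
lemma fam_cone_projection_not_in:
  assumes "finite I" "i0 \<notin> I" "x \<notin> fam_cone g (insert i0 I)"
    and "pair x u < 0" "\<forall>i\<in>I. 0 \<le> pair (g i) u" "pair (g i0) u < 0"
    and h: "\<And>v. h v = pair (g i0) u *s v - pair v u *s g i0"
  shows "h x \<notin> fam_cone (h \<circ> g) I"
proof
  assume "h x \<in> fam_cone (h \<circ> g) I"
  then obtain l where l: "h x = (\<Sum>i\<in>I. l i *s h (g i))" "\<forall>i\<in>I. 0 \<le> l i"
    by (auto simp: fam_cone_def)
  define y where "y = (\<Sum>i\<in>I. l i *s g i)"
  define \<alpha> where "\<alpha> = pair (g i0) u"
  define \<beta> where "\<beta> = (pair x u - pair y u) / \<alpha>"
  have "y \<in> fam_cone g I"
    using l(2) by (auto simp: fam_cone_def y_def)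
  then have "0 \<le> pair y u"
    using assms(5) by (rule pair_fam_cone_nonneg)
  then have "0 \<le> \<beta>"
    using assms(4,6) by (auto simp: \<beta>_def \<alpha>_def intro!: divide_nonpos_neg)
  have "(\<Sum>i\<in>I. l i *s h (g i)) = h y"
    by (simp add: h y_def pair_sum_left pair_scale_left vec_eq_iff sum_subtractf
        sum_distrib_left sum_distrib_right algebra_simps)
  with l(1) have "\<alpha> *s x = \<alpha> *s y + (pair x u - pair y u) *s g i0"
    by (simp add: h \<alpha>_def vec_eq_iff algebra_simps)
  then have "x = y + \<beta> *s g i0"
    using assms(6) by (simp add: \<alpha>_def \<beta>_def vec_eq_iff field_simps)
  with \<open>y \<in> fam_cone g I\<close> \<open>0 \<le> \<beta>\<close> have "x \<in> fam_cone g (insert i0 I)"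
    using fam_cone_insert[OF assms(1,2)] by blast
  with assms(3) show False ..
qed

lemma farkas_fam_cone:
  assumes "finite I" "x \<notin> fam_cone g I"
  shows "\<exists>u. pair x u < 0 \<and> (\<forall>i\<in>I. 0 \<le> pair (g i) u)"
  using assms
proof (induction I arbitrary: g x rule: finite_induct)
  case empty
  then have "x \<noteq> 0"
    by (auto simp: fam_cone_def)
  then have "pair x (- x) < 0"
    using pair_self_pos[of x] by (simp add: pair_neg_right)
  then show ?case
    by blast
next
  case (insert i0 I)
  have "x \<notin> fam_cone g I"
    using insert.prems fam_cone_insert[OF insert.hyps, of g] by force
  then obtain u where u: "pair x u < 0" "\<forall>i\<in>I. 0 \<le> pair (g i) u"
    using insert.IH by blast
  show ?case
  proof (cases "0 \<le> pair (g i0) u")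
    case True
    with u show ?thesis
      by auto
  next
    case False
    define h where "h v = pair (g i0) u *s v - pair v u *s g i0" for v
    have "h x \<notin> fam_cone (h \<circ> g) I"
      using insert.hyps insert.prems u False
      by (intro fam_cone_projection_not_in[where u = u]) (auto simp: h_def)
    then obtain w where w: "pair (h x) w < 0" "\<forall>i\<in>I. 0 \<le> pair (h (g i)) w"
      using insert.IH by fastforce
    define u' where "u' = pair (g i0) u *s w - pair (g i0) w *s u"
    have adjoint: "pair v u' = pair (h v) w" for v
      by (simp add: u'_def h_def pair_simps pair_commute[of "g i0" w] algebra_simps)
    have "pair (g i0) u' = 0"
      by (simp add: u'_def pair_simps)
    with w show ?thesis
      by (intro exI[of _ u']) (simp add: adjoint)
  qed
qed

lemma zero_in_cone_gen: "0 \<in> cone_gen S"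
  unfolding cone_gen_def by (auto intro!: exI[of _ "\<lambda>_. 0"])

lemma generator_in_cone_gen:
  assumes "finite S" "s \<in> S"
  shows "s \<in> cone_gen S"
proof -
  have "(\<Sum>v\<in>S. (if v = s then 1 else 0) *s v) = (\<Sum>v\<in>S. if v = s then v else 0)"
    by (intro sum.cong) auto
  also have "\<dots> = s"
    using assms by simp
  finally show ?thesis
    unfolding cone_gen_def by (auto intro!: exI[of _ "\<lambda>v. if v = s then 1 else 0"])
qed

lemma cone_gen_add:
  assumes "v \<in> cone_gen S" "w \<in> cone_gen S"
  shows "v + w \<in> cone_gen S"
proof -
  obtain a b where "v = (\<Sum>x\<in>S. a x *s x)" "\<forall>x\<in>S. 0 \<le> a x"
    "w = (\<Sum>x\<in>S. b x *s x)" "\<forall>x\<in>S. 0 \<le> b x"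
    using assms by (auto simp: cone_gen_def)
  then show ?thesis
    unfolding cone_gen_def
    by (auto simp: sum.distrib[symmetric] intro!: exI[of _ "\<lambda>x. a x + b x"])
qed

lemma cone_gen_scale:
  assumes "v \<in> cone_gen S" "0 \<le> c"
  shows "c *s v \<in> cone_gen S"
proof -
  obtain a where "v = (\<Sum>x\<in>S. a x *s x)" "\<forall>x\<in>S. 0 \<le> a x"
    using assms by (auto simp: cone_gen_def)
  with assms(2) show ?thesis
    unfolding cone_gen_def
    by (auto simp: vec_eq_iff sum_distrib_left mult.assoc intro!: exI[of _ "\<lambda>x. c * a x"])
qed

lemma cone_gen_absorb:
  assumes "x \<in> cone_gen S"
  shows "{y + c *s x | y c. y \<in> cone_gen S \<and> 0 \<le> c} = cone_gen S"
proof (intro equalityI subsetI)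
  fix v
  assume "v \<in> {y + c *s x | y c. y \<in> cone_gen S \<and> 0 \<le> c}"
  then show "v \<in> cone_gen S"
    using assms by (auto intro!: cone_gen_add cone_gen_scale)
next
  fix v
  assume "v \<in> cone_gen S"
  then show "v \<in> {y + c *s x | y c. y \<in> cone_gen S \<and> 0 \<le> c}"
    by (intro CollectI exI[of _ v] exI[of _ "0::rat"]) simp
qed

lemma cone_gen_insert:
  assumes "finite S"
  shows "cone_gen (insert x S) = {y + c *s x | y c. y \<in> cone_gen S \<and> 0 \<le> c}"
proof (cases "x \<in> S")
  case True
  then show ?thesis
    using cone_gen_absorb[OF generator_in_cone_gen[OF assms True]] by (simp add: insert_absorb)
next
  case False
  then show ?thesis
    using fam_cone_insert[OF assms False] by (simp add: cone_gen_eq_fam_cone)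
qed

lemma cone_gen_remove_redundant:
  assumes "finite S" "s \<in> S" "s \<in> cone_gen (S - {s})"
  shows "cone_gen (S - {s}) = cone_gen S"
proof -
  have "cone_gen S = cone_gen (insert s (S - {s}))"
    using assms(2) by (simp add: insert_absorb)
  also have "\<dots> = {y + c *s s | y c. y \<in> cone_gen (S - {s}) \<and> 0 \<le> c}"
    using assms(1) by (intro cone_gen_insert) simp
  also have "\<dots> = cone_gen (S - {s})"
    by (rule cone_gen_absorb[OF assms(3)])
  finally show ?thesis ..
qed

lemma pair_cone_gen_nonneg:
  assumes "v \<in> cone_gen S" "\<And>s. s \<in> S \<Longrightarrow> 0 \<le> pair s u"
  shows "0 \<le> pair v u"
  using assms pair_fam_cone_nonneg[of v "\<lambda>v. v" S u] by (simp add: cone_gen_eq_fam_cone)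

lemma cone_gen_singleton: "cone_gen {q} = {c *s q | c. 0 \<le> c}"
  unfolding cone_gen_def by auto

lemma cone_gen_singleton_scale:
  assumes "0 < c"
  shows "cone_gen {c *s q} = cone_gen {q}"
proof -
  have "d *s q = (d / c) *s (c *s q)" for d
    using assms by simp
  then show ?thesis
    using assms unfolding cone_gen_singleton by (fastforce intro: divide_nonneg_pos)
qed

lemma rat_poly_cone_irredundant_generators:
  assumes "rat_poly_cone \<sigma>"
  obtains S where "finite S" "\<forall>v\<in>S. lattice_pt v" "\<sigma> = cone_gen S"
    "\<And>x. x \<in> S \<Longrightarrow> x \<notin> cone_gen (S - {x})"
proof -
  from assms obtain S where S: "finite S" "\<forall>v\<in>S. lattice_pt v" "\<sigma> = cone_gen S"
    by (auto simp: rat_poly_cone_def)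
  define generates where "generates T \<longleftrightarrow> T \<subseteq> S \<and> cone_gen T = \<sigma>" for T
  obtain S0 where S0: "generates S0" "\<And>T. generates T \<Longrightarrow> card S0 \<le> card T"
    using ex_has_least_nat[of generates S card] S(3) by (auto simp: generates_def)
  have fin: "finite S0"
    using S0(1) S(1) by (auto simp: generates_def intro: finite_subset)
  have "x \<notin> cone_gen (S0 - {x})" if "x \<in> S0" for x
  proof
    assume "x \<in> cone_gen (S0 - {x})"
    then have "generates (S0 - {x})"
      using S0(1) fin that cone_gen_remove_redundant by (auto simp: generates_def)
    then have "card S0 \<le> card (S0 - {x})"
      by (rule S0(2))
    with card_Diff1_less[OF fin that] show False
      by linarith
  qed
  with S0(1) fin S(2) show ?thesis
    by (intro that[of S0]) (auto simp: generates_def)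
qed

lemma lattice_pt_primitive_multiple:
  assumes "lattice_pt s" "s \<noteq> 0"
  shows "\<exists>q c. primitive q \<and> 0 < c \<and> s = c *s q"
proof -
  define a where "a i = \<lfloor>s $ i\<rfloor>" for i
  have s_eq: "s $ i = of_int (a i)" for i
    using assms(1) unfolding lattice_pt_def a_def by (metis Ints_cases floor_of_int)
  define G where "G = Gcd (range a)"
  from assms(2) obtain i0 where "s $ i0 \<noteq> 0"
    by (auto simp: vec_eq_iff)
  then have "G \<noteq> 0"
    using s_eq by (auto simp: G_def)
  then have G_pos: "0 < G"
    unfolding G_def by (metis Gcd_int_greater_eq_0 order_le_neq_trans)
  have G_dvd: "G dvd a i" for i
    unfolding G_def by (rule Gcd_dvd) auto
  define q where "q = (1 / of_int G) *s s"
  have q_eq: "q $ i = of_int (a i div G)" for i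
    using G_dvd[of i] G_pos unfolding q_def by (auto simp: s_eq elim!: dvdE)
  have "primitive q"
    unfolding primitive_def
  proof (intro conjI allI impI)
    show "lattice_pt q"
      unfolding lattice_pt_def q_eq by auto
    show "q \<noteq> 0"
      using assms(2) G_pos unfolding q_def by auto
    fix m :: int and w
    assume mw: "lattice_pt w \<and> q = of_int m *s w"
    have "G * m dvd a i" for i
    proof -
      obtain d where d: "w $ i = of_int d"
        using mw unfolding lattice_pt_def by (metis Ints_cases)
      have "of_int (a i div G) = (of_int (m * d) :: rat)"
        using mw d q_eq[of i] by auto
      then have "a i = G * (m * d)"
        using G_dvd[of i] by (metis of_int_eq_iff dvd_mult_div_cancel)
      then show ?thesis
        by auto
    qed
    then have "G * m dvd G"
      unfolding G_def by (intro Gcd_greatest) auto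
    then have "G * m dvd G * 1"
      by simp
    then have "m dvd 1"
      using G_pos by (subst (asm) dvd_mult_cancel_left) auto
    then show "\<bar>m\<bar> = 1"
      by simp
  qed
  moreover have "s = of_int G *s q"
    using G_pos unfolding q_def by simp
  ultimately show ?thesis
    using G_pos by (intro exI[of _ q] exI[of _ "of_int G"]) auto
qed

(* Farkas applied to the cone spanned by the other generators together with the line through s. *)
lemma irredundant_generator_separated:
  assumes fin: "finite S" and sc: "strongly_convex (cone_gen S)"
    and irred: "\<And>x. x \<in> S \<Longrightarrow> x \<notin> cone_gen (S - {x})"
    and "s \<in> S" "t \<in> S - {s}"
  shows "\<exists>u. pair s u = 0 \<and> (\<forall>t'\<in>S - {s}. 0 \<le> pair t' u) \<and> 0 < pair t u"
proof -
  define T where "T = S - {s}"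
  have finT: "finite T" and S_eq: "S = insert s T" and "t \<in> T"
    using fin assms(4,5) by (auto simp: T_def)
  have "- t \<notin> cone_gen (insert s (insert (- s) T))"
  proof
    assume "- t \<in> cone_gen (insert s (insert (- s) T))"
    then obtain y b c where y: "y \<in> cone_gen T" "0 \<le> b" "0 \<le> c"
      and t_eq: "- t = y + (b - c) *s s"
      using finT by (auto simp: cone_gen_insert vector_sub_rdistrib)
    have t_in: "t \<in> cone_gen S"
      using fin assms(5) by (intro generator_in_cone_gen) auto
    show False
    proof (cases "c \<le> b")
      case True
      then have "- t \<in> cone_gen (insert s T)"
        unfolding cone_gen_insert[OF finT] using y t_eq
        by (intro CollectI exI[of _ y] exI[of _ "b - c"]) simp
      then have "- t \<in> cone_gen S"
        by (simp add: S_eq)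
      with t_in sc have "t = 0"
        by (auto simp: strongly_convex_def)
      with irred[of t] assms(5) zero_in_cone_gen show False
        by auto
    next
      case False
      have "s = (1 / (c - b)) *s ((c - b) *s s)"
        using False by (simp del: vector_sub_rdistrib)
      also have "(c - b) *s s = y + t"
        using t_eq by (simp add: vec_eq_iff algebra_simps)
      finally have "s = (1 / (c - b)) *s (y + t)" .
      moreover have "y + t \<in> cone_gen T"
        using finT \<open>t \<in> T\<close> by (intro cone_gen_add[OF y(1)] generator_in_cone_gen)
      ultimately have "s \<in> cone_gen T"
        using False cone_gen_scale[of "y + t" T "1 / (c - b)"] by simp
      with irred[OF assms(4)] show False
        by (simp add: T_def)
    qed
  qed
  then have "- t \<notin> fam_cone (\<lambda>v. v) (insert s (insert (- s) T))"
    by (simp add: cone_gen_eq_fam_cone)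
  with finT obtain u where u: "pair (- t) u < 0" "\<forall>i\<in>insert s (insert (- s) T). 0 \<le> pair i u"
    using farkas_fam_cone[of "insert s (insert (- s) T)"] by blast
  then have "pair s u = 0"
    by (auto simp: pair_neg_left)
  with u show ?thesis
    by (auto simp: T_def pair_neg_left)
qed

lemma irredundant_generator_exposed:
  assumes "finite S" "strongly_convex (cone_gen S)"
    and "\<And>x. x \<in> S \<Longrightarrow> x \<notin> cone_gen (S - {x})" "s \<in> S"
  shows "\<exists>u. pair s u = 0 \<and> (\<forall>t\<in>S - {s}. 0 < pair t u)"
proof -
  obtain U where U: "\<And>t. t \<in> S - {s} \<Longrightarrow>
      pair s (U t) = 0 \<and> (\<forall>t'\<in>S - {s}. 0 \<le> pair t' (U t)) \<and> 0 < pair t (U t)"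
    using irredundant_generator_separated[OF assms] by metis
  define u where "u = (\<Sum>t\<in>S - {s}. U t)"
  have "pair s u = 0"
    using U by (simp add: u_def pair_sum_right)
  moreover have "0 < pair t u" if "t \<in> S - {s}" for t
    unfolding u_def pair_sum_right using U that assms(1) by (intro sum_pos2[of _ t]) auto
  ultimately show ?thesis
    by blast
qed

lemma exposed_generator_face:
  assumes "finite S" "s \<in> S" "pair s u = 0" "\<forall>t\<in>S - {s}. 0 < pair t u"
  shows "is_face (cone_gen {s}) (cone_gen S)"
proof -
  have nonneg: "0 \<le> pair x u" if "x \<in> S" for x
    using assms(3,4) that by (cases "x = s") (auto intro: less_imp_le)
  then have "u \<in> dual_cone (cone_gen S)"
    by (auto simp: dual_cone_def intro: pair_cone_gen_nonneg)
  moreover have "cone_gen S \<inter> {v. pair v u = 0} \<subseteq> cone_gen {s}"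
  proof
    fix v
    assume "v \<in> cone_gen S \<inter> {v. pair v u = 0}"
    then obtain a where a: "v = (\<Sum>x\<in>S. a x *s x)" "\<forall>x\<in>S. 0 \<le> a x"
      and "pair v u = 0"
      by (auto simp: cone_gen_def)
    have "(\<Sum>x\<in>S. a x * pair x u) = 0"
      using \<open>pair v u = 0\<close> by (simp add: a(1) pair_simps)
    then have "\<forall>x\<in>S. a x * pair x u = 0"
      using assms(1) a(2) nonneg by (subst (asm) sum_nonneg_eq_0_iff) auto
    then have "\<forall>x\<in>S - {s}. a x = 0"
      using assms(4) by force
    then have "v = a s *s s"
      using assms(1,2) by (simp add: a(1) sum.remove)
    with a(2) assms(2) show "v \<in> cone_gen {s}"
      by (auto simp: cone_gen_singleton)
  qed
  moreover have "cone_gen {s} \<subseteq> cone_gen S \<inter> {v. pair v u = 0}"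
    using assms by (auto simp: cone_gen_singleton pair_scale_left
        intro: cone_gen_scale generator_in_cone_gen)
  ultimately show ?thesis
    unfolding is_face_def by blast
qed

lemma irredundant_generator_ray_multiple:
  assumes fin: "finite S" and lat: "\<forall>v\<in>S. lattice_pt v" and sc: "strongly_convex (cone_gen S)"
    and irred: "\<And>x. x \<in> S \<Longrightarrow> x \<notin> cone_gen (S - {x})" and "s \<in> S"
  shows "\<exists>q c. q \<in> ray_gens (cone_gen S) \<and> 0 < c \<and> s = c *s q"
proof -
  obtain u where u: "pair s u = 0" "\<forall>t\<in>S - {s}. 0 < pair t u"
    using irredundant_generator_exposed[OF fin sc irred \<open>s \<in> S\<close>] by blast
  have "s \<noteq> 0"
    using irred[OF \<open>s \<in> S\<close>] zero_in_cone_gen by metis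
  then obtain q c where q: "primitive q" "0 < c" "s = c *s q"
    using lattice_pt_primitive_multiple[of s] lat \<open>s \<in> S\<close> by blast
  have "is_face (cone_gen {q}) (cone_gen S)"
    using exposed_generator_face[OF fin \<open>s \<in> S\<close> u] cone_gen_singleton_scale[OF q(2), of q]
    by (simp add: q(3))
  with q show ?thesis
    by (auto simp: ray_gens_def)
qed

lemma face_subset: "is_face F X \<Longrightarrow> F \<subseteq> X"
  by (auto simp: is_face_def)

lemma ray_gens_subset: "ray_gens X \<subseteq> X"
proof
  fix q
  assume "q \<in> ray_gens X"
  then have "cone_gen {q} \<subseteq> X"
    by (simp add: ray_gens_def face_subset)
  moreover have "q \<in> cone_gen {q}"
    by (auto simp: cone_gen_singleton intro!: exI[of _ 1])
  ultimately show "q \<in> X" ..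
qed

lemma in_dual_cone_if_nonneg_on_ray_gens:
  assumes "rat_poly_cone \<sigma>" "strongly_convex \<sigma>" "\<And>q. q \<in> ray_gens \<sigma> \<Longrightarrow> 0 \<le> pair q u"
  shows "u \<in> dual_cone \<sigma>"
proof -
  obtain S where S: "finite S" "\<forall>v\<in>S. lattice_pt v" "\<sigma> = cone_gen S"
    "\<And>x. x \<in> S \<Longrightarrow> x \<notin> cone_gen (S - {x})"
    using rat_poly_cone_irredundant_generators[OF assms(1)] by blast
  have "0 \<le> pair s u" if s: "s \<in> S" for s
  proof -
    have "strongly_convex (cone_gen S)"
      using assms(2) S(3) by simp
    then obtain q c where "q \<in> ray_gens \<sigma>" "0 < c" "s = c *s q"
      using irredundant_generator_ray_multiple[OF S(1,2) _ S(4) s] S(3) by auto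
    then show ?thesis
      using assms(3) by (simp add: pair_scale_left)
  qed
  then show ?thesis
    unfolding dual_cone_def S(3) by (auto intro: pair_cone_gen_nonneg)
qed

lemma face_normalized_functional:
  assumes "is_face \<gamma> \<sigma>" "v \<in> \<sigma>" "v \<notin> \<gamma>"
  shows "\<exists>w \<in> dual_cone \<sigma> \<inter> perp \<gamma>. pair v w = 1"
proof -
  obtain w0 where w0: "w0 \<in> dual_cone \<sigma>" "\<gamma> = \<sigma> \<inter> {x. pair x w0 = 0}"
    using assms(1) by (auto simp: is_face_def)
  have "0 < pair v w0"
    using w0 assms(2,3) by (auto simp: dual_cone_def order_le_less)
  define w where "w = (1 / pair v w0) *s w0"
  have "w \<in> dual_cone \<sigma>"
    using w0(1) \<open>0 < pair v w0\<close> by (auto simp: dual_cone_def w_def pair_scale_right)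
  moreover have "w \<in> perp \<gamma>"
    using w0(2) by (auto simp: perp_def w_def pair_scale_right)
  moreover have "pair v w = 1"
    using \<open>0 < pair v w0\<close> by (simp add: w_def pair_scale_right)
  ultimately show ?thesis
    by blast
qed

(* Only the inequalities in the definition of a Demazure root are needed here, not compatibility:
   at q = p s the s-th summand cancels pair q w exactly. *)
lemma demazure_shift_in_dual_cone:
  assumes "rat_poly_cone \<sigma>" "strongly_convex \<sigma>" "finite J" "inj_on p J"
    and roots: "\<And>j. j \<in> J \<Longrightarrow> demazure_root \<sigma> (p j) (e j)" and "w \<in> dual_cone \<sigma>"
  shows "w + (\<Sum>j\<in>J. pair (p j) w *s e j) \<in> dual_cone \<sigma>"
proof (rule in_dual_cone_if_nonneg_on_ray_gens[OF assms(1,2)])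
  fix q
  assume q: "q \<in> ray_gens \<sigma>"
  have nonneg: "0 \<le> pair x w" if "x \<in> ray_gens \<sigma>" for x
    using that ray_gens_subset assms(6) by (auto simp: dual_cone_def)
  have term_nonneg: "0 \<le> pair (p j) w * pair q (e j)" if "j \<in> J" "q \<noteq> p j" for j
    using roots[OF that(1)] q that(2) nonneg by (auto simp: demazure_root_def)
  have "0 \<le> pair q w + (\<Sum>j\<in>J. pair (p j) w * pair q (e j))"
  proof (cases "\<exists>s\<in>J. q = p s")
    case True
    then obtain s where s: "s \<in> J" "q = p s"
      by blast
    have "pair q w + (\<Sum>j\<in>J. pair (p j) w * pair q (e j))
        = (\<Sum>j\<in>J - {s}. pair (p j) w * pair q (e j))"
      using roots[OF s(1)] s assms(3) by (simp add: sum.remove demazure_root_def)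
    also have "0 \<le> \<dots>"
      using assms(4) s term_nonneg by (intro sum_nonneg) (auto dest: inj_onD)
    finally show ?thesis .
  next
    case False
    then show ?thesis
      using q nonneg term_nonneg by (intro add_nonneg_nonneg sum_nonneg) auto
  qed
  then show "0 \<le> pair q (w + (\<Sum>j\<in>J. pair (p j) w *s e j))"
    by (simp add: pair_simps)
qed

lemma pair_demazure_shift:
  assumes "finite J" "\<And>j. j \<in> J \<Longrightarrow> pair v (e j) = (if j = s then -1 else 0)"
  shows "pair v (w + (\<Sum>j\<in>J. pair (p j) w *s e j))
           = pair v w - (if s \<in> J then pair (p s) w else 0)"
proof -
  have "(\<Sum>j\<in>J. pair (p j) w * pair v (e j)) = (\<Sum>j\<in>J. if j = s then - pair (p s) w else 0)"
    using assms(2) by (intro sum.cong) auto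
  then show ?thesis
    using assms(1) by (simp add: pair_simps)
qed

lemma perp_lincomb:
  assumes "w \<in> perp \<gamma>" "\<And>j. j \<in> J \<Longrightarrow> e j \<in> perp \<gamma>"
  shows "w + (\<Sum>j\<in>J. c j *s e j) \<in> perp \<gamma>"
  using assms by (simp add: perp_def pair_simps)

theorem mainTheorem11:
  fixes \<sigma> \<tau> \<gamma> :: "(rat ^ 'n) set"
    and k :: nat
    and p e1 e2 :: "nat \<Rightarrow> rat ^ 'n"
  assumes "rat_poly_cone \<sigma>" and "strongly_convex \<sigma>"
    and "regular_face \<tau> \<sigma>"
    and "inj_on p {1..k}" and "p ` {1..k} = ray_gens \<tau>"
    and "\<And>r. r \<in> {1..k} \<Longrightarrow> demazure_root \<sigma> (p r) (e1 r) \<and> demazure_root \<sigma> (p r) (e2 r)"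
    and "\<And>r s. r \<in> {1..k} \<Longrightarrow> s \<in> {1..k} \<Longrightarrow>
           pair (p s) (e1 r) = (if r = s then -1 else 0) \<and> pair (p s) (e2 r) = (if r = s then -1 else 0)"
    and "is_face \<gamma> \<sigma>"
    and "\<And>r. r \<in> {1..k} \<Longrightarrow> p r \<notin> \<gamma> \<Longrightarrow> e1 r \<in> perp \<gamma> \<or> e2 r \<in> perp \<gamma>"
  shows "\<forall>r\<in>{1..k}. p r \<notin> \<gamma> \<longrightarrow>
           (\<exists>u \<in> perp \<gamma> \<inter> dual_cone \<sigma>. pair (p r) u = 1 \<and>
               (\<forall>j\<in>{1..k}. j \<noteq> r \<longrightarrow> pair (p j) u = 0))"
proof (intro ballI impI)
  fix r
  assume r: "r \<in> {1..k}" "p r \<notin> \<gamma>"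
  have "\<tau> \<subseteq> \<sigma>"
    using assms(3) by (simp add: regular_face_def face_subset)
  then have p_in: "p j \<in> \<sigma>" if "j \<in> {1..k}" for j
    using that assms(5) ray_gens_subset[of \<tau>] by blast
  obtain w where w: "w \<in> dual_cone \<sigma>" "w \<in> perp \<gamma>" "pair (p r) w = 1"
    using face_normalized_functional[OF assms(8) p_in[OF r(1)] r(2)] by blast
  define J where "J = {j \<in> {1..k}. j \<noteq> r \<and> p j \<notin> \<gamma>}"
  define e where "e j = (if e1 j \<in> perp \<gamma> then e1 j else e2 j)" for j
  have e: "demazure_root \<sigma> (p j) (e j)" "e j \<in> perp \<gamma>"
    "\<And>s. s \<in> {1..k} \<Longrightarrow> pair (p s) (e j) = (if j = s then -1 else 0)" if "j \<in> J" for j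
    using that assms(6,7,9)[of j] by (auto simp: J_def e_def)
  define u where "u = w + (\<Sum>j\<in>J. pair (p j) w *s e j)"
  have J: "finite J" "inj_on p J"
    using inj_on_subset[OF assms(4)] by (auto simp: J_def subset_iff)
  have "u \<in> perp \<gamma> \<inter> dual_cone \<sigma>"
    using demazure_shift_in_dual_cone[OF assms(1,2) J e(1) w(1)] perp_lincomb[OF w(2) e(2)]
    by (simp add: u_def)
  moreover have "pair (p s) u = pair (p s) w - (if s \<in> J then pair (p s) w else 0)"
    if "s \<in> {1..k}" for s
    unfolding u_def using that e(3) by (intro pair_demazure_shift) (auto simp: J_def)
  moreover have "pair (p j) w = 0" if "p j \<in> \<gamma>" for j
    using w(2) that by (auto simp: perp_def)
  ultimately show "\<exists>u \<in> perp \<gamma> \<inter> dual_cone \<sigma>. pair (p r) u = 1 \<and>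
      (\<forall>j\<in>{1..k}. j \<noteq> r \<longrightarrow> pair (p j) u = 0)"
    using r w(3) by (intro bexI[of _ u]) (auto simp: J_def)
qed

end
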